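(* Let $k$ be a commutative ring and $A$ a commutative $k$-algebra such that $\operatorname{Der}_k(A)$ is a finitely generated $A$-module and $\operatorname{Ider}_k(A)=\operatorname{Der}_k(A)$. Then for each integer $m\ge1$, every Hasse–Schmidt derivation $D'\in\operatorname{HS}_k(A;m)$ is $(m+1)$-integrable, i.e. there exists $D\in\operatorname{HS}_k(A;m+1)$ with $\tau_{m+1,m}(D)=D'$; consequently every $D'\in\operatorname{HS}_k(A;m)$ is integrable (is the truncation of some element of $\operatorname{HS}_k(A;\infty)$).
   Context: For $m\ge1$ an integer or $m=\infty$, a Hasse–Schmidt derivation of $A$ over $k$ of length $m$ is a sequence $D=(D_0,\dots,D_m)$ of $k$-linear maps $A\to A$ with $D_0=\mathrm{Id}_A$ and $D_i(xy)=\sum_{r+s=i}D_r(x)D_s(y)$; their set is $\operatorname{HS}_k(A;m)$. For $m\le q$, $\tau_{qm}(D)=(D_0,\dots,D_m)$. A derivation $\delta\in\operatorname{Der}_k(A)$ is integrable if $\delta=D_1$ for some $D\in\operatorname{HS}_k(A;\infty)$; $\operatorname{Ider}_k(A)$ denotes the set of integrable derivations. An element $D'\in\operatorname{HS}_k(A;m)$ is $q$-integrable ($q\ge m$) if $D'=\tau_{qm}(D)$ for some $D\in\operatorname{HS}_k(A;q)$. *)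

theory Defs
  imports Main "HOL-Library.Extended_Nat"
begin

text \<open>A commutative k-algebra A is modelled by a commutative ring type 'a together with
  a ring homomorphism (structure map) phi from the commutative ring type 'k to 'a.\<close>

definition alg_map :: "('k::comm_ring_1 \<Rightarrow> 'a::comm_ring_1) \<Rightarrow> bool" where
  "alg_map phi \<longleftrightarrow> phi 1 = 1 \<and> (\<forall>a b. phi (a + b) = phi a + phi b) \<and>
                      (\<forall>a b. phi (a * b) = phi a * phi b)"

definition k_linear :: "('k::comm_ring_1 \<Rightarrow> 'a::comm_ring_1) \<Rightarrow> ('a \<Rightarrow> 'a) \<Rightarrow> bool" where
  "k_linear phi f \<longleftrightarrow> (\<forall>x y. f (x + y) = f x + f y) \<and> (\<forall>c x. f (phi c * x) = phi c * f x)"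

definition Der :: "('k::comm_ring_1 \<Rightarrow> 'a::comm_ring_1) \<Rightarrow> ('a \<Rightarrow> 'a) set" where
  "Der phi = {d. k_linear phi d \<and> (\<forall>x y. d (x * y) = x * d y + y * d x)}"

definition Der_fin_gen :: "('k::comm_ring_1 \<Rightarrow> 'a::comm_ring_1) \<Rightarrow> bool" where
  "Der_fin_gen phi \<longleftrightarrow> (\<exists>S. finite S \<and> S \<subseteq> Der phi \<and>
      (\<forall>d \<in> Der phi. \<exists>c :: ('a \<Rightarrow> 'a) \<Rightarrow> 'a. d = (\<lambda>x. \<Sum>e\<in>S. c e * e x)))"

text \<open>Hasse--Schmidt derivations of length m (m a natural number or \<infinity>), as sequences
  D :: nat \<Rightarrow> A \<Rightarrow> A; only the components D i with i \<le> m are relevant.\<close>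
definition HS :: "('k::comm_ring_1 \<Rightarrow> 'a::comm_ring_1) \<Rightarrow> enat \<Rightarrow> (nat \<Rightarrow> 'a \<Rightarrow> 'a) \<Rightarrow> bool" where
  "HS phi m D \<longleftrightarrow> D 0 = id \<and>
     (\<forall>i. enat i \<le> m \<longrightarrow> k_linear phi (D i) \<and>
         (\<forall>x y. D i (x * y) = (\<Sum>r\<le>i. D r x * D (i - r) y)))"

definition truncates_to :: "nat \<Rightarrow> (nat \<Rightarrow> 'a \<Rightarrow> 'a) \<Rightarrow> (nat \<Rightarrow> 'a \<Rightarrow> 'a) \<Rightarrow> bool" where
  "truncates_to m D D' \<longleftrightarrow> (\<forall>i\<le>m. D i = D' i)"

definition Ider :: "('k::comm_ring_1 \<Rightarrow> 'a::comm_ring_1) \<Rightarrow> ('a \<Rightarrow> 'a) set" where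
  "Ider phi = {d. d \<in> Der phi \<and> (\<exists>D. HS phi \<infinity> D \<and> D 1 = d)}"

end

theory Submission
  imports Defs
begin

(*
  Every Hasse--Schmidt derivation of finite length m extends to one of infinite length,
  provided every derivation is integrable.

  The argument is the usual "correct the top component" induction.  Hasse--Schmidt
  derivations of infinite length form a group under the composition
  (E o F)_n = sum_{a+b=n} E_a o F_b, and for s > 0 the "stretching" G[s] of G, with
  G[s]_{s l} = G_l and all other components 0, is again one.  Suppose E in HS(A;oo)
  agrees with D' in HS(A;m) below level j (0 < j <= m).  Then delta = D'_j - E_j is a
  derivation; integrate it to some G in HS(A;oo) with G_1 = delta.  The composition
  E o G[j] agrees with E below level j and has j-th component E_j + delta = D'_j.
  Starting from the trivial Hasse--Schmidt derivation (1, 0, 0, ...) and iterating up to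
  level m yields an infinite extension of D'; truncating it gives the (m+1)-extension.
*)

lemma k_linear_zero_at_zero: "k_linear phi f \<Longrightarrow> f 0 = 0"
  unfolding k_linear_def by (metis add.right_neutral add_left_cancel)

lemma k_linear_sum: "k_linear phi f \<Longrightarrow> f (sum g A) = (\<Sum>i\<in>A. f (g i))"
  by (induction A rule: infinite_finite_induct) (auto simp: k_linear_zero_at_zero k_linear_def)

lemma k_linear_const_zero: "k_linear phi (\<lambda>x. 0)"
  unfolding k_linear_def by simp

lemma k_linear_id: "k_linear phi id"
  unfolding k_linear_def by simp

lemma k_linear_sum_comp:
  assumes "\<forall>a\<in>A. k_linear phi (f a) \<and> k_linear phi (g a)"
  shows "k_linear phi (\<lambda>x. \<Sum>a\<in>A. f a (g a x))"
  using assms unfolding k_linear_def by (simp add: sum.distrib sum_distrib_left)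

lemma sum_triangle_shear:
  "(\<Sum>a\<le>n. \<Sum>e\<le>a. (G::nat\<Rightarrow>nat\<Rightarrow>'b::comm_monoid_add) a e) = (\<Sum>e\<le>n. \<Sum>f\<le>n-e. G (e+f) e)"
  by (simp add: sum.Sigma)
     (rule sum.reindex_bij_witness[where i="\<lambda>(e,f). (e+f,e)" and j="\<lambda>(a,e). (e,a-e)"]; auto)

lemma sum_triangle_swap:
  "(\<Sum>f\<le>n. \<Sum>c\<le>n-f. (K::nat\<Rightarrow>nat\<Rightarrow>'b::comm_monoid_add) c f) = (\<Sum>c\<le>n. \<Sum>f\<le>n-c. K c f)"
  by (simp add: sum.Sigma)
     (rule sum.reindex_bij_witness[where i="\<lambda>(c,f). (f,c)" and j="\<lambda>(f,c). (c,f)"]; auto)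

lemma HS_infinite_iff:
  "HS phi \<infinity> D \<longleftrightarrow> D 0 = id \<and>
     (\<forall>i. k_linear phi (D i) \<and> (\<forall>x y. D i (x * y) = (\<Sum>r\<le>i. D r x * D (i - r) y)))"
  unfolding HS_def by simp

lemma HS_infinite_imp_HS: "HS phi \<infinity> D \<Longrightarrow> HS phi n D"
  unfolding HS_def by simp

definition hs_one :: "nat \<Rightarrow> 'a \<Rightarrow> 'a::comm_ring_1" where
  "hs_one n = (if n = 0 then id else (\<lambda>x. 0))"

lemma HS_hs_one: "HS phi \<infinity> hs_one"
  unfolding HS_infinite_iff
proof (intro conjI allI)
  fix i :: nat and x y
  show "k_linear phi (hs_one i)"
    by (simp add: hs_one_def k_linear_id k_linear_const_zero)
  have "(\<Sum>r\<le>i. hs_one r x * hs_one (i - r) y) = (\<Sum>r\<le>i. if r = 0 then hs_one i (x * y) else 0)"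
    by (intro sum.cong refl) (auto simp: hs_one_def)
  then show "hs_one i (x * y) = (\<Sum>r\<le>i. hs_one r x * hs_one (i - r) y)"
    by (simp add: sum.delta)
qed (simp add: hs_one_def)

definition hs_comp :: "(nat \<Rightarrow> 'a \<Rightarrow> 'a::comm_ring_1) \<Rightarrow> (nat \<Rightarrow> 'a \<Rightarrow> 'a) \<Rightarrow> nat \<Rightarrow> 'a \<Rightarrow> 'a" where
  "hs_comp E F n = (\<lambda>x. \<Sum>a\<le>n. E a (F (n - a) x))"

text \<open>The Leibniz rule for the composite; this is the coefficient comparison behind
  (E o F)(xy) = E(F(x) F(y)) = E(F(x)) E(F(y)) in A[[t]].\<close>
lemma hs_comp_Leibniz:
  assumes E_lin: "\<And>i. k_linear phi (E i)"
    and E_mult: "\<And>i x y. E i (x * y) = (\<Sum>r\<le>i. E r x * E (i - r) y)"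
    and F_mult: "\<And>i x y. F i (x * y) = (\<Sum>r\<le>i. F r x * F (i - r) y)"
  shows "hs_comp E F n (x * y) = (\<Sum>r\<le>n. hs_comp E F r x * hs_comp E F (n - r) y)"
proof -
  define P where "P c e = E e (F c x)" for c e
  define Q where "Q d f = E f (F d y)" for d f
  have "hs_comp E F n (x * y) = (\<Sum>a\<le>n. \<Sum>c\<le>n-a. \<Sum>e\<le>a. P c e * Q (n-a-c) (a-e))"
    unfolding hs_comp_def F_mult P_def Q_def by (simp add: k_linear_sum[OF E_lin] E_mult)
  also have "\<dots> = (\<Sum>a\<le>n. \<Sum>e\<le>a. \<Sum>c\<le>n-a. P c e * Q (n-a-c) (a-e))"
    by (simp add: sum.swap[where A="{..n-_}"])
  also have "\<dots> = (\<Sum>e\<le>n. \<Sum>f\<le>n-e. \<Sum>c\<le>(n-e)-f. P c e * Q ((n-e)-c-f) f)"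
    by (subst sum_triangle_shear) (simp add: diff_diff_left add.commute add.left_commute)
  also have "\<dots> = (\<Sum>e\<le>n. \<Sum>c\<le>n-e. \<Sum>f\<le>n-(e+c). P ((e+c)-e) e * Q (n-(e+c)-f) f)"
    by (subst sum_triangle_swap) (simp add: diff_diff_left)
  also have "\<dots> = (\<Sum>r\<le>n. (\<Sum>e\<le>r. P (r-e) e) * (\<Sum>f\<le>n-r. Q (n-r-f) f))"
    unfolding sum_product by (subst sum_triangle_shear) simp
  also have "\<dots> = (\<Sum>r\<le>n. hs_comp E F r x * hs_comp E F (n - r) y)"
    unfolding hs_comp_def P_def Q_def ..
  finally show ?thesis .
qed

lemma HS_hs_comp:
  assumes E: "HS phi \<infinity> E" and F: "HS phi \<infinity> F"
  shows "HS phi \<infinity> (hs_comp E F)"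
  unfolding HS_infinite_iff
proof (intro conjI allI)
  show "hs_comp E F 0 = id"
    using E F by (auto simp: HS_infinite_iff hs_comp_def)
  show "k_linear phi (hs_comp E F i)" for i
    unfolding hs_comp_def using E F by (intro k_linear_sum_comp) (auto simp: HS_infinite_iff)
  show "hs_comp E F i (x * y) = (\<Sum>r\<le>i. hs_comp E F r x * hs_comp E F (i - r) y)" for i x y
    using E F by (intro hs_comp_Leibniz[of phi]) (auto simp: HS_infinite_iff)
qed

text \<open>The stretching G[s] of G, corresponding to substituting t^s for t in
  sum_n G_n t^n.\<close>
definition hs_stretch :: "nat \<Rightarrow> (nat \<Rightarrow> 'a \<Rightarrow> 'a::comm_ring_1) \<Rightarrow> nat \<Rightarrow> 'a \<Rightarrow> 'a" where
  "hs_stretch s G n = (if s dvd n then G (n div s) else (\<lambda>x. 0))"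

text \<open>In the Leibniz sum for G[s] at level s l only the indices r = s j survive.\<close>
lemma hs_stretch_Leibniz_sum:
  assumes s: "s > 0"
  shows "(\<Sum>r\<le>s*l. hs_stretch s G r x * hs_stretch s G (s*l - r) y) = (\<Sum>j\<le>l. G j x * G (l - j) y)"
proof -
  define h where "h r = hs_stretch s G r x * hs_stretch s G (s*l - r) y" for r
  have vanish: "h r = 0" if "r \<notin> (\<lambda>j. s*j) ` {..l}" "r \<le> s*l" for r
  proof -
    have "\<not> s dvd r"
    proof
      assume "s dvd r"
      then obtain j where "r = s*j" by blast
      with that s show False by auto
    qed
    then show ?thesis by (simp add: h_def hs_stretch_def)
  qed
  have "(\<Sum>r\<le>s*l. h r) = (\<Sum>r\<in>(\<lambda>j. s*j) ` {..l}. h r)"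
    by (rule sum.mono_neutral_right) (use vanish in auto)
  also have "\<dots> = (\<Sum>j\<le>l. h (s*j))"
    by (subst sum.reindex) (use s in \<open>auto simp: inj_on_def\<close>)
  also have "\<dots> = (\<Sum>j\<le>l. G j x * G (l - j) y)"
  proof (intro sum.cong refl)
    fix j assume "j \<in> {..l}"
    then have "s*l - s*j = s*(l - j)" by (simp add: right_diff_distrib')
    then show "h (s*j) = G j x * G (l - j) y" using s by (simp add: h_def hs_stretch_def)
  qed
  finally show ?thesis unfolding h_def .
qed

lemma HS_hs_stretch:
  assumes G: "HS phi \<infinity> G" and s: "s > 0"
  shows "HS phi \<infinity> (hs_stretch s G)"
  unfolding HS_infinite_iff
proof (intro conjI allI)
  have G_lin: "\<And>i. k_linear phi (G i)"
    and G_mult: "\<And>i x y. G i (x * y) = (\<Sum>r\<le>i. G r x * G (i - r) y)"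
    using G unfolding HS_infinite_iff by auto
  show "hs_stretch s G 0 = id" using G by (simp add: hs_stretch_def HS_infinite_iff)
  fix n x y
  show "k_linear phi (hs_stretch s G n)" by (simp add: hs_stretch_def k_linear_const_zero G_lin)
  show "hs_stretch s G n (x * y) = (\<Sum>r\<le>n. hs_stretch s G r x * hs_stretch s G (n - r) y)"
  proof (cases "s dvd n")
    case True
    then obtain l where n: "n = s*l" by blast
    have "hs_stretch s G n (x * y) = (\<Sum>j\<le>l. G j x * G (l - j) y)"
      using s by (simp add: n hs_stretch_def G_mult)
    then show ?thesis unfolding n hs_stretch_Leibniz_sum[OF s] .
  next
    case False
    have "\<not> (s dvd r \<and> s dvd (n - r))" if "r \<le> n" for r
      using that False dvd_add[of s r "n - r"] by auto
    then show ?thesis using False by (auto simp: hs_stretch_def intro!: sum.neutral)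
  qed
qed

lemma HS_top_difference_Der:
  assumes D: "HS phi n D" and E: "HS phi n E" and j: "enat j \<le> n" "j > 0"
    and agree: "\<forall>i<j. E i = D i"
  shows "(\<lambda>x. D j x - E j x) \<in> Der phi"
  unfolding Der_def
proof (intro CollectI conjI allI)
  define \<delta> where "\<delta> x = D j x - E j x" for x
  have D_lin: "k_linear phi (D j)" and E_lin: "k_linear phi (E j)"
    using D E j unfolding HS_def by auto
  then show "k_linear phi (\<lambda>x. D j x - E j x)"
    unfolding k_linear_def by (simp add: algebra_simps)
  have D0: "D 0 = id" and E0: "E 0 = id" using D E unfolding HS_def by auto
  fix x y
  have "\<delta> (x * y) = (\<Sum>r\<le>j. D r x * D (j - r) y - E r x * E (j - r) y)"
    using D E j unfolding \<delta>_def HS_def by (simp add: sum_subtractf)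
  also have "\<dots> = (\<Sum>r\<le>j. (if r = 0 then x * \<delta> y else 0) + (if r = j then \<delta> x * y else 0))"
    by (intro sum.cong refl) (use agree j D0 E0 in \<open>auto simp: \<delta>_def algebra_simps\<close>)
  also have "\<dots> = x * \<delta> y + \<delta> x * y"
    by (simp add: sum.distrib sum.delta)
  finally show "D j (x * y) - E j (x * y) = x * (D j y - E j y) + y * (D j x - E j x)"
    by (simp add: \<delta>_def ac_simps)
qed

lemma hs_comp_stretch_low:
  assumes E: "HS phi \<infinity> E" and G0: "G 0 = id" and s: "s > 0" and i: "i \<le> s"
  shows "hs_comp E (hs_stretch s G) i x = E i x + (if i = s then G 1 x else 0)"
proof -
  have E0: "E 0 = id" and E_lin: "\<And>a. k_linear phi (E a)"
    using E unfolding HS_infinite_iff by auto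
  have summand: "E a (hs_stretch s G (i - a) x) =
      (if a = i then E i x else 0) + (if a = 0 \<and> i = s then G 1 x else 0)" if a: "a \<le> i" for a
  proof (cases "i - a = 0")
    case True
    then show ?thesis using a G0 s i by (auto simp: hs_stretch_def)
  next
    case nonzero: False
    show ?thesis
    proof (cases "s dvd (i - a)")
      case True
      text \<open>A positive multiple of s that is at most s equals s.\<close>
      then have "i - a = s" using nonzero i a by (metis diff_le_self dvd_imp_le le_antisym le_trans not_gr0)
      then have "a = 0" "i = s" using i a by auto
      then show ?thesis using s E0 by (simp add: hs_stretch_def)
    next
      case False
      then show ?thesis using nonzero k_linear_zero_at_zero[OF E_lin] by (auto simp: hs_stretch_def)
    qed
  qed
  have "hs_comp E (hs_stretch s G) i x =
      (\<Sum>a\<le>i. (if a = i then E i x else 0) + (if a = 0 \<and> i = s then G 1 x else 0))"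
    unfolding hs_comp_def by (intro sum.cong refl) (simp add: summand)
  then show ?thesis by (simp add: sum.distrib sum.delta)
qed

lemma HS_extend_one_level:
  assumes all_integrable: "Ider phi = Der phi"
    and D: "HS phi n D" and j: "enat j \<le> n" "j > 0"
    and E: "HS phi \<infinity> E" and agree: "\<forall>i<j. E i = D i"
  obtains E' where "HS phi \<infinity> E'" "\<forall>i\<le>j. E' i = D i"
proof -
  define \<delta> where "\<delta> x = D j x - E j x" for x
  have "\<delta> \<in> Der phi"
    unfolding \<delta>_def using HS_top_difference_Der[OF D HS_infinite_imp_HS[OF E] j agree] .
  then obtain G where G: "HS phi \<infinity> G" and G1: "G 1 = \<delta>"
    using all_integrable unfolding Ider_def by auto
  have G0: "G 0 = id" using G unfolding HS_infinite_iff by simp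
  have "HS phi \<infinity> (hs_comp E (hs_stretch j G))"
    using HS_hs_comp[OF E HS_hs_stretch[OF G j(2)]] .
  moreover have "\<forall>i\<le>j. hs_comp E (hs_stretch j G) i = D i"
  proof (intro allI impI ext)
    fix i x assume "i \<le> j"
    then show "hs_comp E (hs_stretch j G) i x = D i x"
      using hs_comp_stretch_low[where G=G and s=j, OF E G0 j(2), unfolded G1] agree
      by (cases "i = j") (auto simp: \<delta>_def)
  qed
  ultimately show ?thesis using that by blast
qed

lemma HS_finite_integrable:
  assumes all_integrable: "Ider phi = Der phi" and D: "HS phi (enat m) D"
  shows "\<exists>E. HS phi \<infinity> E \<and> truncates_to m E D"
proof -
  have "\<exists>E. HS phi \<infinity> E \<and> (\<forall>i\<le>j. E i = D i)" if "j \<le> m" for j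
    using that
  proof (induction j)
    case 0
    have "D 0 = id" using D unfolding HS_def by simp
    then show ?case by (intro exI[of _ hs_one] conjI HS_hs_one) (simp add: hs_one_def)
  next
    case (Suc j)
    then obtain E where "HS phi \<infinity> E" "\<forall>i<Suc j. E i = D i" by (auto simp: less_Suc_eq_le)
    with HS_extend_one_level[OF all_integrable D] Suc.prems show ?case by (metis enat_ord_simps(1) zero_less_Suc)
  qed
  then show ?thesis unfolding truncates_to_def by blast
qed

theorem mainTheorem2:
  fixes phi :: "'k::comm_ring_1 \<Rightarrow> 'a::comm_ring_1"
  assumes "alg_map phi"
    and "Der_fin_gen phi"
    and "Ider phi = Der phi"
    and "m \<ge> 1"
    and "HS phi (enat m) D'"
  shows "(\<exists>D. HS phi (enat (m + 1)) D \<and> truncates_to m D D') \<and>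
         (\<exists>D. HS phi \<infinity> D \<and> truncates_to m D D')"
proof -
  obtain D where D: "HS phi \<infinity> D" "truncates_to m D D'"
    using HS_finite_integrable[OF assms(3) assms(5)] by blast
  then have "HS phi (enat (m + 1)) D" using HS_infinite_imp_HS by blast
  with D show ?thesis by blast
qed

end
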